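(* Let $\lambda\in\mathbb{R}$, let $r\ge s\ge 1$ be integers and let $n\ge 1$ be an integer. Then \[ \phi_{n,\lambda}^{(r,s)}(x)=\frac{1}{e^{x}}\sum_{k=0}^{\infty}\frac{1}{k!}\bigg(\prod_{j=1}^{n}\big[(k+(j-1)(r-s))_s-(n-j)\lambda\big]\bigg)x^{k}. \] In particular, for $x=1$, \[ \phi_{n,\lambda}^{(r,s)}=\frac{1}{e}\sum_{k=0}^{\infty}\frac{1}{k!}\bigg(\prod_{j=1}^{n}\big[(k+(j-1)(r-s))_s-(n-j)\lambda\big]\bigg). \]
   Context: Notation: $(x)_0=1$, $(x)_m=x(x-1)\cdots(x-m+1)$ for $m\ge1$ (falling factorial). Let $D=\frac{d}{dx}$ and let $x$ also denote the operator of multiplication by $x$ (acting on polynomials/smooth functions). The generalized degenerate $(r,s)$-Stirling numbers of the second kind $S_\lambda^{(r,s)}(n,k)$, $0\le k\le ns$, are defined by the operator identity \[ \prod_{k=0}^{n-1}\Big(x^{r}D^{s}-k\lambda\, x^{r-s}\Big)=x^{n(r-s)}\sum_{k=0}^{ns}S_\lambda^{(r,s)}(n,k)\,x^{k}D^{k}, \] where the product of operators is written with the factors $k=0,1,\dots,n-1$ from left to right. The generalized degenerate $(r,s)$-Bell polynomials are $\phi_{n,\lambda}^{(r,s)}(x)=\sum_{k=0}^{ns}S_\lambda^{(r,s)}(n,k)x^k$, and $\phi_{n,\lambda}^{(r,s)}=\phi_{n,\lambda}^{(r,s)}(1)$. *)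

theory Defs
  imports Complex_Main "HOL-Computational_Algebra.Polynomial"
begin

definition falling_fact :: "real \<Rightarrow> nat \<Rightarrow> real" where
  "falling_fact y m = (\<Prod>i<m. (y - of_nat i))"

definition stirling_op :: "real \<Rightarrow> nat \<Rightarrow> nat \<Rightarrow> nat \<Rightarrow> real poly \<Rightarrow> real poly" where
  "stirling_op lam r s k p =
     monom 1 r * ((pderiv ^^ s) p) - smult (of_nat k * lam) (monom 1 (r - s) * p)"

text \<open>Product of operators, factors k = 0,...,n-1 written left to right
  (so the factor k = n-1 is applied first).\<close>
definition stirling_prod_op :: "real \<Rightarrow> nat \<Rightarrow> nat \<Rightarrow> nat \<Rightarrow> real poly \<Rightarrow> real poly" where
  "stirling_prod_op lam r s n = foldr (\<circ>) (map (stirling_op lam r s) [0..<n]) id"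

text \<open>Generalized degenerate (r,s)-Stirling numbers of the second kind,
  defined as the (unique) coefficients in the normal-ordering operator identity;
  set to 0 outside 0 <= k <= n s.\<close>
definition gd_stirling2 :: "real \<Rightarrow> nat \<Rightarrow> nat \<Rightarrow> nat \<Rightarrow> nat \<Rightarrow> real" where
  "gd_stirling2 lam r s n = (THE c. (\<forall>k > n * s. c k = 0) \<and>
     (\<forall>p. stirling_prod_op lam r s n p =
        monom 1 (n * (r - s)) * (\<Sum>k\<le>n * s. smult (c k) (monom 1 k * (pderiv ^^ k) p))))"

definition gd_bell :: "real \<Rightarrow> nat \<Rightarrow> nat \<Rightarrow> nat \<Rightarrow> real \<Rightarrow> real" where
  "gd_bell lam r s n x = (\<Sum>k\<le>n * s. gd_stirling2 lam r s n k * x ^ k)"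

end

theory Submission
  imports Defs
begin

text \<open>The operator \<open>x^r D^s - k \<lambda> x^(r-s)\<close> maps \<open>x^m\<close> to \<open>((m)_s - k \<lambda>) x^(m+r-s)\<close>,
  so the whole product maps \<open>x^m\<close> to \<open>G_n(m) x^(m+n(r-s))\<close>, where \<open>G_n(y)\<close> is the product
  in the theorem, while the normally ordered side maps it to
  \<open>(\<Sum>_k S(n,k) (m)_k) x^(m+n(r-s))\<close>. As a product of \<open>n\<close> polynomials of degree \<open>s\<close>,
  \<open>G_n\<close> is a linear combination of the falling factorials \<open>(y)_k\<close>, \<open>k \<le> ns\<close>, and since the
  values \<open>(m)_k\<close> are triangular in \<open>m\<close>, the \<open>S(n,k)\<close> are exactly its coefficients.
  Summing \<open>G_n(m) x^m / m!\<close> with \<open>\<Sum>_m (m)_k x^m / m! = x^k e^x\<close> gives the formula.\<close>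

lemma falling_fact_0 [simp]: "falling_fact y 0 = 1"
  by (simp add: falling_fact_def)

lemma falling_fact_Suc: "falling_fact y (Suc k) = falling_fact y k * (y - of_nat k)"
  by (simp add: falling_fact_def)

lemma falling_fact_of_nat_eq_0: "m < k \<Longrightarrow> falling_fact (of_nat m) k = 0"
  unfolding falling_fact_def by (rule prod_zero) auto

lemma falling_fact_of_nat_self: "falling_fact (of_nat m) m = fact m"
  unfolding falling_fact_def fact_prod_rev by (simp add: of_nat_diff lessThan_atLeast0)

lemma falling_fact_of_nat_add: "falling_fact (of_nat (i + k)) k * fact i = fact (i + k)"
proof (induction k)
  case (Suc k)
  have "falling_fact (of_nat (i + Suc k)) (Suc k) = of_nat (i + Suc k) * falling_fact (of_nat (i + k)) k"
    unfolding falling_fact_def by (subst prod.lessThan_Suc_shift) simp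
  then show ?case
    using Suc by (simp only: mult.assoc) simp
qed simp

lemma falling_fact_exp_sums:
  "(\<lambda>m. falling_fact (of_nat m) k / fact m * x ^ m) sums (x ^ k * exp x)"
proof -
  have "(\<lambda>i. x ^ k * (x ^ i /\<^sub>R fact i)) sums (x ^ k * exp x)"
    by (rule sums_mult[OF exp_converges])
  moreover have "x ^ k * (x ^ i /\<^sub>R fact i) =
      falling_fact (of_nat (i + k)) k / fact (i + k) * x ^ (i + k)" for i
    using falling_fact_of_nat_add[of i k] by (simp add: power_add divide_simps)
  ultimately have "(\<lambda>i. falling_fact (of_nat (i + k)) k / fact (i + k) * x ^ (i + k))
      sums (x ^ k * exp x)"
    by simp
  moreover have "(\<Sum>i<k. falling_fact (of_nat i) k / fact i * x ^ i) = 0"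
    by (simp add: falling_fact_of_nat_eq_0)
  ultimately show ?thesis
    using sums_iff_shift[of "\<lambda>m. falling_fact (of_nat m) k / fact m * x ^ m" k] by simp
qed

lemma falling_fact_coeffs_unique:
  assumes "\<forall>k>N. c k = 0" and "\<forall>k>N. c' k = 0"
    and "\<And>m::nat. (\<Sum>k\<le>N. c k * falling_fact (of_nat m) k) = (\<Sum>k\<le>N. c' k * falling_fact (of_nat m) k)"
  shows "c = c'"
proof
  fix m
  show "c m = c' m"
  proof (induction m rule: less_induct)
    case (less m)
    have "(\<Sum>k\<le>N. (c k - c' k) * falling_fact (of_nat m) k) =
        (\<Sum>k\<le>N. if k = m then (c m - c' m) * fact m else 0)"
    proof (rule sum.cong)
      fix k
      show "(c k - c' k) * falling_fact (of_nat m) k = (if k = m then (c m - c' m) * fact m else 0)"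
        using less[of k] falling_fact_of_nat_eq_0[of m k] falling_fact_of_nat_self[of m]
        by (cases k m rule: linorder_cases) auto
    qed simp
    moreover have "(\<Sum>k\<le>N. (c k - c' k) * falling_fact (of_nat m) k) = 0"
      using assms(3)[of m] by (simp add: left_diff_distrib sum_subtractf)
    ultimately show ?case
      using assms(1,2) by (auto split: if_splits)
  qed
qed

definition ff_span :: "nat \<Rightarrow> (real \<Rightarrow> real) \<Rightarrow> bool" where
  "ff_span d f \<longleftrightarrow> (\<exists>c. \<forall>y. f y = (\<Sum>k\<le>d. c k * falling_fact y k))"

lemma ff_span_falling_fact: "k \<le> d \<Longrightarrow> ff_span d (\<lambda>y. falling_fact y k)"
  unfolding ff_span_def
  by (rule exI[of _ "\<lambda>j. if j = k then 1 else 0"])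
    (simp add: if_distrib[where f="\<lambda>x. x * a" for a] cong: if_cong)

lemma ff_span_add: "ff_span d f \<Longrightarrow> ff_span d g \<Longrightarrow> ff_span d (\<lambda>y. f y + g y)"
  unfolding ff_span_def
proof (elim exE)
  fix c c'
  assume "\<forall>y. f y = (\<Sum>k\<le>d. c k * falling_fact y k)" "\<forall>y. g y = (\<Sum>k\<le>d. c' k * falling_fact y k)"
  then show "\<exists>c. \<forall>y. f y + g y = (\<Sum>k\<le>d. c k * falling_fact y k)"
    by (intro exI[of _ "\<lambda>k. c k + c' k"]) (simp add: sum.distrib distrib_right)
qed

lemma ff_span_cmult: "ff_span d f \<Longrightarrow> ff_span d (\<lambda>y. a * f y)"
  unfolding ff_span_def
proof (elim exE)
  fix c assume "\<forall>y. f y = (\<Sum>k\<le>d. c k * falling_fact y k)"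
  then show "\<exists>c. \<forall>y. a * f y = (\<Sum>k\<le>d. c k * falling_fact y k)"
    by (intro exI[of _ "\<lambda>k. a * c k"]) (simp add: sum_distrib_left mult.assoc)
qed

lemma ff_span_const: "ff_span d (\<lambda>y. a)"
  using ff_span_cmult[OF ff_span_falling_fact[of 0 d], of a] by simp

lemma ff_span_sum:
  "finite A \<Longrightarrow> (\<And>i. i \<in> A \<Longrightarrow> ff_span d (F i)) \<Longrightarrow> ff_span d (\<lambda>y. \<Sum>i\<in>A. F i y)"
  by (induction A rule: finite_induct) (auto intro: ff_span_add ff_span_const[of d 0, simplified])

lemma ff_span_mono: "ff_span d f \<Longrightarrow> d \<le> d' \<Longrightarrow> ff_span d' f"
  unfolding ff_span_def
proof (elim exE)
  fix c assume "\<forall>y. f y = (\<Sum>k\<le>d. c k * falling_fact y k)" and "d \<le> d'"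
  then have "(\<Sum>k\<le>d'. (if k \<le> d then c k else 0) * falling_fact y k) = f y" for y
    by (subst sum.mono_neutral_right[of "{..d'}" "{..d}"]) auto
  then show "\<exists>c. \<forall>y. f y = (\<Sum>k\<le>d'. c k * falling_fact y k)"
    by (intro exI[of _ "\<lambda>k. if k \<le> d then c k else 0"]) simp
qed

lemma ff_span_mult_linear: "ff_span d f \<Longrightarrow> ff_span (Suc d) (\<lambda>y. (y + a) * f y)"
proof -
  assume "ff_span d f"
  then obtain c where c: "\<And>y. f y = (\<Sum>k\<le>d. c k * falling_fact y k)"
    unfolding ff_span_def by blast
  \<comment> \<open>\<open>(y + a) (y)_k = (y)_(k+1) + (k + a) (y)_k\<close>\<close>
  have "(y + a) * f y =
      (\<Sum>k\<le>d. c k * falling_fact y (Suc k) + c k * (of_nat k + a) * falling_fact y k)" for y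
    by (simp add: c sum_distrib_left falling_fact_Suc algebra_simps)
  moreover have "ff_span (Suc d)
      (\<lambda>y. \<Sum>k\<le>d. c k * falling_fact y (Suc k) + c k * (of_nat k + a) * falling_fact y k)"
    by (intro ff_span_sum ff_span_add ff_span_cmult ff_span_falling_fact) auto
  ultimately show ?thesis by simp
qed

lemma ff_span_mult: "ff_span d1 f \<Longrightarrow> ff_span d2 g \<Longrightarrow> ff_span (d1 + d2) (\<lambda>y. f y * g y)"
proof -
  assume "ff_span d1 f" and g: "ff_span d2 g"
  then obtain c where c: "\<And>y. f y = (\<Sum>k\<le>d1. c k * falling_fact y k)"
    unfolding ff_span_def by blast
  have ff_g: "ff_span (k + d2) (\<lambda>y. falling_fact y k * g y)" for k
  proof (induction k)
    case (Suc k)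
    then have "ff_span (Suc (k + d2)) (\<lambda>y. (y + - of_nat k) * (falling_fact y k * g y))"
      by (rule ff_span_mult_linear)
    then show ?case by (simp add: falling_fact_Suc algebra_simps)
  qed (simp add: g)
  have "ff_span (d1 + d2) (\<lambda>y. \<Sum>k\<le>d1. c k * (falling_fact y k * g y))"
    by (intro ff_span_sum ff_span_cmult ff_span_mono[OF ff_g]) auto
  then show ?thesis by (simp add: c sum_distrib_right mult.assoc)
qed

lemma ff_span_prod:
  "finite A \<Longrightarrow> (\<And>j. j \<in> A \<Longrightarrow> ff_span d (F j)) \<Longrightarrow> ff_span (card A * d) (\<lambda>y. \<Prod>j\<in>A. F j y)"
proof (induction A rule: finite_induct)
  case (insert j A)
  then have "ff_span (d + card A * d) (\<lambda>y. F j y * (\<Prod>j\<in>A. F j y))"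
    by (intro ff_span_mult) auto
  then show ?case using insert by simp
qed (simp add: ff_span_const)

lemma ff_span_falling_fact_shift: "ff_span k (\<lambda>y. falling_fact (y + a) k)"
proof (induction k)
  case (Suc k)
  then have "ff_span (Suc k) (\<lambda>y. (y + (a - of_nat k)) * falling_fact (y + a) k)"
    by (rule ff_span_mult_linear)
  then show ?case by (simp add: falling_fact_Suc algebra_simps)
qed (simp add: ff_span_const)

lemma higher_pderiv_monom_falling_fact:
  "(pderiv ^^ k) (monom a m) = monom (a * falling_fact (of_nat m) k) (m - k)"
proof (induction k)
  case (Suc k)
  show ?case
  proof (cases "k < m")
    case True
    then have "of_nat (m - k) = (of_nat m - of_nat k :: real)" by simp
    then show ?thesis using Suc by (simp add: pderiv_monom falling_fact_Suc algebra_simps diff_Suc)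
  next
    case False
    then show ?thesis using Suc
      by (cases "k = m") (simp_all add: pderiv_monom falling_fact_Suc falling_fact_of_nat_eq_0)
  qed
qed simp

lemma monom_mult_higher_pderiv_monom:
  "monom 1 k * (pderiv ^^ k) (monom a m) = monom (a * falling_fact (of_nat m) k) m"
  by (cases "k \<le> m")
    (simp_all add: higher_pderiv_monom_falling_fact mult_monom falling_fact_of_nat_eq_0)

lemma additive_poly_fun_eqI:
  fixes F H :: "'a::comm_semiring_1 poly \<Rightarrow> 'b::cancel_comm_monoid_add"
  assumes "\<And>a m. F (monom a m) = H (monom a m)"
    and F_add: "\<And>p q. F (p + q) = F p + F q" and H_add: "\<And>p q. H (p + q) = H p + H q"
  shows "F p = H p"
proof -
  have "F 0 = 0" "H 0 = 0"
    using F_add[of 0 0] H_add[of 0 0] by simp_all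
  then have F_sum: "F (sum g A) = (\<Sum>x\<in>A. F (g x))"
    and H_sum: "H (sum g A) = (\<Sum>x\<in>A. H (g x))" for g A
    using sum_comp_morphism[of F g A, OF _ F_add] sum_comp_morphism[of H g A, OF _ H_add]
    by (simp_all add: o_def)
  have "F (\<Sum>i\<le>degree p. monom (coeff p i) i) = H (\<Sum>i\<le>degree p. monom (coeff p i) i)"
    unfolding F_sum H_sum assms(1) by (rule refl)
  then show ?thesis by (simp add: poly_as_sum_of_monoms)
qed

lemma stirling_op_monom:
  "s \<le> r \<Longrightarrow> stirling_op lam r s k (monom a m) =
     monom (a * (falling_fact (of_nat m) s - of_nat k * lam)) (m + (r - s))"
  unfolding stirling_op_def
  by (cases "s \<le> m") (simp_all add: higher_pderiv_monom_falling_fact mult_monom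
      falling_fact_of_nat_eq_0 smult_monom diff_monom minus_monom algebra_simps)

lemma stirling_op_add:
  "stirling_op lam r s k (p + q) = stirling_op lam r s k p + stirling_op lam r s k q"
  unfolding stirling_op_def by (simp add: higher_pderiv_add algebra_simps smult_add_right)

lemma stirling_prod_op_0 [simp]: "stirling_prod_op lam r s 0 = id"
  by (simp add: stirling_prod_op_def)

lemma stirling_prod_op_Suc:
  "stirling_prod_op lam r s (Suc n) p = stirling_prod_op lam r s n (stirling_op lam r s n p)"
proof -
  have foldr_comp: "foldr (\<circ>) fs g = foldr (\<circ>) fs id \<circ> g" for fs and g :: "real poly \<Rightarrow> real poly"
    by (induction fs) auto
  show ?thesis
    unfolding stirling_prod_op_def by (simp add: foldr_comp[of _ "stirling_op lam r s n"])
qed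

lemma stirling_prod_op_add:
  "stirling_prod_op lam r s n (p + q) = stirling_prod_op lam r s n p + stirling_prod_op lam r s n q"
  by (induction n arbitrary: p q) (simp_all add: stirling_prod_op_Suc stirling_op_add)

definition stirling_prod_factor :: "real \<Rightarrow> nat \<Rightarrow> nat \<Rightarrow> nat \<Rightarrow> real \<Rightarrow> real" where
  "stirling_prod_factor lam r s n y =
     (\<Prod>j=1..n. falling_fact (y + of_nat (j - 1) * of_nat (r - s)) s - of_nat (n - j) * lam)"

lemma stirling_prod_factor_Suc:
  "stirling_prod_factor lam r s (Suc n) y =
     (falling_fact y s - of_nat n * lam) * stirling_prod_factor lam r s n (y + of_nat (r - s))"
proof -
  have "(\<Prod>j=Suc 1..Suc n. falling_fact (y + of_nat (j - 1) * of_nat (r - s)) s - of_nat (Suc n - j) * lam)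
      = stirling_prod_factor lam r s n (y + of_nat (r - s))"
    unfolding prod.shift_bounds_cl_Suc_ivl stirling_prod_factor_def
    by (rule prod.cong) (auto simp: of_nat_diff algebra_simps)
  moreover have "stirling_prod_factor lam r s (Suc n) y = (falling_fact y s - of_nat n * lam) *
      (\<Prod>j=Suc 1..Suc n. falling_fact (y + of_nat (j - 1) * of_nat (r - s)) s - of_nat (Suc n - j) * lam)"
    unfolding stirling_prod_factor_def by (subst prod.atLeast_Suc_atMost) simp_all
  ultimately show ?thesis by simp
qed

lemma stirling_prod_op_monom:
  "s \<le> r \<Longrightarrow> stirling_prod_op lam r s n (monom a m) =
     monom (a * stirling_prod_factor lam r s n (of_nat m)) (m + n * (r - s))"
proof (induction n arbitrary: a m)
  case 0
  show ?case by (simp add: stirling_prod_factor_def)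
next
  case (Suc n)
  have "m + (r - s) + n * (r - s) = m + Suc n * (r - s)" by simp
  moreover have "real (m + (r - s)) = real m + real (r - s)" by simp
  ultimately show ?case
    using Suc by (simp only: stirling_prod_op_Suc stirling_op_monom stirling_prod_factor_Suc mult.assoc)
qed

lemma ff_span_stirling_prod_factor: "ff_span (n * s) (stirling_prod_factor lam r s n)"
proof -
  have "ff_span (card {1..n} * s) (\<lambda>y. \<Prod>j=1..n.
      falling_fact (y + of_nat (j - 1) * of_nat (r - s)) s + - (of_nat (n - j) * lam))"
    by (intro ff_span_prod ff_span_add ff_span_falling_fact_shift ff_span_const) auto
  then show ?thesis
    unfolding stirling_prod_factor_def by (simp add: fun_eq_iff)
qed

definition normal_ordered_op :: "nat \<Rightarrow> nat \<Rightarrow> (nat \<Rightarrow> real) \<Rightarrow> real poly \<Rightarrow> real poly" where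
  "normal_ordered_op e N c p = monom 1 e * (\<Sum>k\<le>N. smult (c k) (monom 1 k * (pderiv ^^ k) p))"

lemma normal_ordered_op_add:
  "normal_ordered_op e N c (p + q) = normal_ordered_op e N c p + normal_ordered_op e N c q"
  unfolding normal_ordered_op_def
  by (simp add: higher_pderiv_add algebra_simps smult_add_right sum.distrib)

lemma normal_ordered_op_monom:
  "normal_ordered_op e N c (monom a m) =
     monom (a * (\<Sum>k\<le>N. c k * falling_fact (of_nat m) k)) (m + e)"
  unfolding normal_ordered_op_def
  by (simp add: monom_mult_higher_pderiv_monom smult_monom mult_monom monom_sum[symmetric]
      sum_distrib_left algebra_simps)

lemma normal_ordered_op_inject:
  assumes "\<forall>k>N. c k = 0" and "\<forall>k>N. c' k = 0"
    and "normal_ordered_op e N c = normal_ordered_op e N c'"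
  shows "c = c'"
proof (rule falling_fact_coeffs_unique[OF assms(1,2)])
  fix m
  have "normal_ordered_op e N c (monom 1 m) = normal_ordered_op e N c' (monom 1 m)"
    using assms(3) by simp
  then show "(\<Sum>k\<le>N. c k * falling_fact (of_nat m) k) = (\<Sum>k\<le>N. c' k * falling_fact (of_nat m) k)"
    by (simp add: normal_ordered_op_monom)
qed

lemma stirling_prod_op_eq_normal_ordered_op:
  assumes "s \<le> r"
    and "\<And>m::nat. stirling_prod_factor lam r s n (of_nat m) = (\<Sum>k\<le>N. c k * falling_fact (of_nat m) k)"
  shows "stirling_prod_op lam r s n = normal_ordered_op (n * (r - s)) N c"
proof
  fix p
  show "stirling_prod_op lam r s n p = normal_ordered_op (n * (r - s)) N c p"
    by (rule additive_poly_fun_eqI)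
      (simp_all add: stirling_prod_op_monom[OF assms(1)] normal_ordered_op_monom assms(2)
        stirling_prod_op_add normal_ordered_op_add)
qed

lemma stirling_prod_factor_falling_fact_expansion:
  assumes "s \<le> r"
  shows "stirling_prod_factor lam r s n y = (\<Sum>k\<le>n * s. gd_stirling2 lam r s n k * falling_fact y k)"
proof -
  obtain c0 where c0: "\<And>y. stirling_prod_factor lam r s n y = (\<Sum>k\<le>n * s. c0 k * falling_fact y k)"
    using ff_span_stirling_prod_factor unfolding ff_span_def by blast
  define c where "c k = (if k \<le> n * s then c0 k else 0)" for k
  have c: "stirling_prod_factor lam r s n y = (\<Sum>k\<le>n * s. c k * falling_fact y k)" for y
    unfolding c0 c_def by simp
  have c_vanishes: "\<forall>k>n * s. c k = 0"
    by (simp add: c_def)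
  have "gd_stirling2 lam r s n = c"
    unfolding gd_stirling2_def normal_ordered_op_def[symmetric]
  proof (rule the_equality)
    show "(\<forall>k>n * s. c k = 0) \<and>
        (\<forall>p. stirling_prod_op lam r s n p = normal_ordered_op (n * (r - s)) (n * s) c p)"
      using c_vanishes stirling_prod_op_eq_normal_ordered_op[OF assms c] by simp
  next
    fix c'
    assume "(\<forall>k>n * s. c' k = 0) \<and>
        (\<forall>p. stirling_prod_op lam r s n p = normal_ordered_op (n * (r - s)) (n * s) c' p)"
    then show "c' = c"
      using c_vanishes stirling_prod_op_eq_normal_ordered_op[OF assms c]
      by (intro normal_ordered_op_inject[of "n * s" c' c "n * (r - s)"]) (auto simp: fun_eq_iff)
  qed
  then show ?thesis
    using c by simp
qed

lemma gd_bell_eq_series: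
  assumes "s \<le> r"
  shows "gd_bell lam r s n x = (1 / exp x) * (\<Sum>m. (1 / fact m) * stirling_prod_factor lam r s n (of_nat m) * x ^ m)"
proof -
  have "(\<lambda>m. \<Sum>k\<le>n * s. gd_stirling2 lam r s n k * (falling_fact (of_nat m) k / fact m * x ^ m))
      sums (\<Sum>k\<le>n * s. gd_stirling2 lam r s n k * (x ^ k * exp x))"
    by (intro sums_sum sums_mult falling_fact_exp_sums)
  moreover have "(\<Sum>k\<le>n * s. gd_stirling2 lam r s n k * (falling_fact (of_nat m) k / fact m * x ^ m))
      = (1 / fact m) * stirling_prod_factor lam r s n (of_nat m) * x ^ m" for m
    by (simp add: stirling_prod_factor_falling_fact_expansion[OF assms] sum_distrib_left
        sum_distrib_right algebra_simps)
  ultimately have "(\<Sum>m. (1 / fact m) * stirling_prod_factor lam r s n (of_nat m) * x ^ m)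
      = exp x * gd_bell lam r s n x"
    by (simp add: sums_iff gd_bell_def sum_distrib_left algebra_simps)
  then show ?thesis by simp
qed

theorem theorem1:
  fixes lam x :: real and r s n :: nat
  assumes "r \<ge> s" and "s \<ge> 1" and "n \<ge> 1"
  shows "gd_bell lam r s n x = (1 / exp x) *
           (\<Sum>k. (1 / fact k) * (\<Prod>j=1..n. falling_fact (of_nat k + of_nat (j - 1) * of_nat (r - s)) s
                                   - of_nat (n - j) * lam) * x ^ k)
       \<and> gd_bell lam r s n 1 = (1 / exp 1) *
           (\<Sum>k. (1 / fact k) * (\<Prod>j=1..n. falling_fact (of_nat k + of_nat (j - 1) * of_nat (r - s)) s
                                   - of_nat (n - j) * lam))"
  \<comment> \<open>only \<open>s \<le> r\<close> is needed\<close>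
  using gd_bell_eq_series[OF assms(1), of lam n x] gd_bell_eq_series[OF assms(1), of lam n 1]
  unfolding stirling_prod_factor_def by simp

end
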